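(* Let $(\mathcal{C},\psi)$ be a t-pair. Then for every $b\in\{i,d,a\}$, $\operatorname{typ}(\mathcal{U}^{bi}_{\mathcal{C}\psi})\preceq\operatorname{typ}(\mathcal{U}^{bd}_{\mathcal{C}\psi})\preceq\operatorname{typ}(\mathcal{U}^{ba}_{\mathcal{C}\psi})$ and $\operatorname{typ}(\mathcal{U}^{ab}_{\mathcal{C}\psi})\preceq\operatorname{typ}(\mathcal{U}^{db}_{\mathcal{C}\psi})\preceq\operatorname{typ}(\mathcal{U}^{ib}_{\mathcal{C}\psi})$.
   Context: Let $\mathbb{N}=\{0,1,2,\dots\}$; for an integer $k\ge 2$ let $E_k=\{0,1,\dots,k-1\}$; let $\mathcal{P}(\mathbb{N})$ be the set of nonempty finite subsets of $\mathbb{N}$. Let $F$ be a nonempty set (of attribute names). A decision table $T\in\mathcal{M}_k(F)$ is a rectangular table with $n\ge 1$ columns labeled with attributes $f_1,\dots,f_n\in F$ (any two columns labeled with the same attribute are equal), whose rows are pairwise different tuples from $E_k^n$ (the set of rows may be empty), each row being labeled with a set of decisions from $\mathcal{P}(\mathbb{N})$. Write $At(T)=\{f_1,\dots,f_n\}$ and $\Delta(T)$ for the set of rows. For a word $\alpha=(f_{i_1},\delta_1)\cdots(f_{i_m},\delta_m)$ with $f_{i_j}\in At(T)$, $\delta_j\in E_k$, the subtable $T\alpha$ consists of the rows of $T$ having value $\delta_j$ in column $f_{i_j}$ for all $j$ ($T\lambda=T$ for the empty word $\lambda$). Operations on tables: (1) removal of a column from a table with at least two columns (if groups of equal rows appear,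 only the first row of each group, with its decision set, is kept); (2) changing of decisions: the decision sets attached to rows are replaced arbitrarily by sets from $\mathcal{P}(\mathbb{N})$; (3) permutation of columns: swap two columns together with their attribute labels; (4) duplication of columns: add a copy of a column (with its label) next to it. A set $\mathcal{C}\subseteq\mathcal{M}_k(F)$ is a closed class if every table obtained from a table of $\mathcal{C}$ by finitely many such operations belongs to $\mathcal{C}$. A decision tree over $\mathcal{M}_k(F)$ is a finite directed tree with a root (unique node with no entering edge) and at least two nodes such that the root and the edges leaving the root are unlabeled, each worker node (neither root nor terminal) is labeled with an attribute from $F$, each edge leaving a worker node is labeled with a number from $E_k$, and each terminal node is labeled with a number from $\mathbb{N}$. For a complete path $\xi$ (root to terminal node) whose worker nodes are labeled $f_{j_1},\dots,f_{j_m}$ in order, with the edges leaving them labeled $\delta_1,\dots,\delta_m$, put $\pi(\xi)=(f_{j_1},\delta_1)\cdots(f_{j_m},\delta_m)$, $\varphi(\xi)=f_{j_1}\cdots f_{j_m}$ (both empty if $m=0$), and let $\tau(\xi)$ be the label of its terminal node. A nondeterministic decision tree for $T$ is a decision tree $\Gamma$ whose worker-node attributes lie in $At(T)$, such that $\bigcup_{\xi}\Delta(T\pi(\xi))=\Delta(T)$ (union over complete paths), and for every row $r\in\Delta(T)$ and every complete path $\xi$ with $r\in\Delta(T\pi(\xi))$, $\tau(\xi)$ belongs to the decision set of $r$. A decision tree is deterministic if exactly one edge leaves the root and the edges leaving each worker node have pairwise different labels; a deterministic decision tree for $T$ is a deterministic decision tree that is a nondeterministic decision tree for $T$. A complexity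 measure over $\mathcal{M}_k(F)$ is any map $\psi:F^*\to\mathbb{N}$, where $F^*$ is the set of finite words over $F$ including the empty word $\lambda$. For a tree, $\psi(\Gamma)=\max_\xi\psi(\varphi(\xi))$ over complete paths. For $T$ with columns labeled $f_1,\dots,f_n$: $\psi^i(T)=\psi(f_1\cdots f_n)$, $\psi^d(T)$ is the minimum complexity of a deterministic decision tree for $T$, $\psi^a(T)$ the minimum complexity of a nondeterministic decision tree for $T$. A t-pair $(\mathcal{C},\psi)$ consists of a closed class $\mathcal{C}\subseteq\mathcal{M}_k(F)$ and a complexity measure $\psi$ over $\mathcal{M}_k(F)$. For $b,c\in\{i,d,a\}$ define the partial function $\mathcal{U}^{bc}_{\mathcal{C}\psi}(n)=\max\{\psi^b(T):T\in\mathcal{C},\psi^c(T)\le n\}$ (defined iff this set is nonempty and finite). For a partial function $g:\mathbb{N}\to\mathbb{N}$ with domain $\mathrm{Dom}(g)$, let $\mathrm{Dom}^+(g)=\{n\in\mathrm{Dom}(g):g(n)\ge n\}$, $\mathrm{Dom}^-(g)=\{n\in\mathrm{Dom}(g):g(n)\le n\}$. Its type $\operatorname{typ}(g)$ is: $\alpha$ if $\mathrm{Dom}(g)$ is infinite and $g$ is bounded above; $\beta$ if $\mathrm{Dom}(g)$ is infinite, $\mathrm{Dom}^+(g)$ is finite and $g$ is unbounded above; $\gamma$ if $\mathrm{Dom}^+(g)$ and $\mathrm{Dom}^-(g)$ are both infinite; $\delta$ if $\mathrm{Dom}(g)$ is infinite and $\mathrm{Dom}^-(g)$ is finite; $\epsilon$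 if $\mathrm{Dom}(g)$ is finite. $\preceq$ is the linear order $\alpha\preceq\beta\preceq\gamma\preceq\delta\preceq\epsilon$. *)

theory Defs
  imports Main
begin

text \<open>A decision table over attribute names of type 'f: a list of column attributes
  f_1..f_n and an (ordered) list of rows; each row is a tuple (list of length n)
  together with its decision set.\<close>

type_synonym 'f dtable = "'f list \<times> (nat list \<times> nat set) list"

definition atts :: "'f dtable \<Rightarrow> 'f list" where "atts T = fst T"
definition rows :: "'f dtable \<Rightarrow> (nat list \<times> nat set) list" where "rows T = snd T"

definition table_in :: "nat \<Rightarrow> 'f dtable \<Rightarrow> bool" where
  "table_in k T \<longleftrightarrow>
     atts T \<noteq> [] \<and>
     (\<forall>(r, D) \<in> set (rows T). length r = length (atts T) \<and> (\<forall>v \<in> set r. v < k)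
         \<and> finite D \<and> D \<noteq> {}) \<and>
     distinct (map fst (rows T)) \<and>
     (\<forall>i < length (atts T). \<forall>j < length (atts T). atts T ! i = atts T ! j \<longrightarrow>
         (\<forall>(r, D) \<in> set (rows T). r ! i = r ! j))"

definition sub_rows :: "'f dtable \<Rightarrow> ('f \<times> nat) list \<Rightarrow> nat list set" where
  "sub_rows T \<alpha> = {r \<in> set (map fst (rows T)).
      \<forall>(f, \<delta>) \<in> set \<alpha>. \<forall>i < length (atts T). atts T ! i = f \<longrightarrow> r ! i = \<delta>}"

definition del_at :: "nat \<Rightarrow> 'a list \<Rightarrow> 'a list" where
  "del_at i xs = take i xs @ drop (Suc i) xs"

definition dup_at :: "nat \<Rightarrow> 'a list \<Rightarrow> 'a list" where
  "dup_at i xs = take (Suc i) xs @ [xs ! i] @ drop (Suc i) xs"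

definition swap_at :: "nat \<Rightarrow> nat \<Rightarrow> 'a list \<Rightarrow> 'a list" where
  "swap_at i j xs = xs[i := xs ! j, j := xs ! i]"

definition keep_first :: "('a \<times> 'b) list \<Rightarrow> ('a \<times> 'b) list" where
  "keep_first xs = map (nth xs)
     (filter (\<lambda>i. \<forall>j < i. fst (xs ! j) \<noteq> fst (xs ! i)) [0..<length xs])"

definition remove_col :: "nat \<Rightarrow> 'f dtable \<Rightarrow> 'f dtable" where
  "remove_col i T = (del_at i (atts T), keep_first (map (\<lambda>(r, D). (del_at i r, D)) (rows T)))"

definition swap_cols :: "nat \<Rightarrow> nat \<Rightarrow> 'f dtable \<Rightarrow> 'f dtable" where
  "swap_cols i j T = (swap_at i j (atts T), map (\<lambda>(r, D). (swap_at i j r, D)) (rows T))"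

definition dup_col :: "nat \<Rightarrow> 'f dtable \<Rightarrow> 'f dtable" where
  "dup_col i T = (dup_at i (atts T), map (\<lambda>(r, D). (dup_at i r, D)) (rows T))"

definition change_decisions :: "'f dtable \<Rightarrow> 'f dtable \<Rightarrow> bool" where
  "change_decisions T T' \<longleftrightarrow> atts T' = atts T \<and> map fst (rows T') = map fst (rows T) \<and>
      (\<forall>(r, D) \<in> set (rows T'). finite D \<and> D \<noteq> {})"

definition table_op :: "'f dtable \<Rightarrow> 'f dtable \<Rightarrow> bool" where
  "table_op T T' \<longleftrightarrow>
     (\<exists>i < length (atts T). length (atts T) \<ge> 2 \<and> T' = remove_col i T) \<or>
     change_decisions T T' \<or>
     (\<exists>i < length (atts T). \<exists>j < length (atts T). T' = swap_cols i j T) \<or>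
     (\<exists>i < length (atts T). T' = dup_col i T)"

definition closed_class :: "nat \<Rightarrow> 'f dtable set \<Rightarrow> bool" where
  "closed_class k C \<longleftrightarrow> (\<forall>T \<in> C. table_in k T) \<and>
     (\<forall>T \<in> C. \<forall>T'. table_op\<^sup>*\<^sup>* T T' \<longrightarrow> T' \<in> C)"

text \<open>A decision tree is given by the (nonempty) list of children of its unlabelled root.\<close>

datatype 'f dnode = Term nat | Work 'f "(nat \<times> 'f dnode) list"

type_synonym 'f dtree = "'f dnode list"

inductive wf_node :: "nat \<Rightarrow> 'f set \<Rightarrow> 'f dnode \<Rightarrow> bool" for k :: nat and At :: "'f set" where
  "wf_node k At (Term d)"
| "f \<in> At \<Longrightarrow> cs \<noteq> [] \<Longrightarrow> (\<And>\<delta> c. (\<delta>, c) \<in> set cs \<Longrightarrow> \<delta> < k \<and> wf_node k At c)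
     \<Longrightarrow> wf_node k At (Work f cs)"

inductive det_node :: "'f dnode \<Rightarrow> bool" where
  "det_node (Term d)"
| "distinct (map fst cs) \<Longrightarrow> (\<And>\<delta> c. (\<delta>, c) \<in> set cs \<Longrightarrow> det_node c)
     \<Longrightarrow> det_node (Work f cs)"

inductive node_path :: "'f dnode \<Rightarrow> ('f \<times> nat) list \<Rightarrow> nat \<Rightarrow> bool" where
  "node_path (Term d) [] d"
| "(\<delta>, c) \<in> set cs \<Longrightarrow> node_path c p d \<Longrightarrow> node_path (Work f cs) ((f, \<delta>) # p) d"

text \<open>Complete paths of a tree, represented by (pi(xi), tau(xi)).\<close>
definition tree_path :: "'f dtree \<Rightarrow> ('f \<times> nat) list \<Rightarrow> nat \<Rightarrow> bool" where
  "tree_path \<Gamma> p d \<longleftrightarrow> (\<exists>c \<in> set \<Gamma>. node_path c p d)"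

definition ndtree_for :: "nat \<Rightarrow> 'f dtable \<Rightarrow> 'f dtree \<Rightarrow> bool" where
  "ndtree_for k T \<Gamma> \<longleftrightarrow>
     \<Gamma> \<noteq> [] \<and> (\<forall>c \<in> set \<Gamma>. wf_node k (set (atts T)) c) \<and>
     (\<Union>{sub_rows T p | p d. tree_path \<Gamma> p d}) = set (map fst (rows T)) \<and>
     (\<forall>(r, D) \<in> set (rows T). \<forall>p d. tree_path \<Gamma> p d \<and> r \<in> sub_rows T p \<longrightarrow> d \<in> D)"

definition dtree_for :: "nat \<Rightarrow> 'f dtable \<Rightarrow> 'f dtree \<Rightarrow> bool" where
  "dtree_for k T \<Gamma> \<longleftrightarrow> ndtree_for k T \<Gamma> \<and> length \<Gamma> = 1 \<and> (\<forall>c \<in> set \<Gamma>. det_node c)"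

definition tree_cplx :: "('f list \<Rightarrow> nat) \<Rightarrow> 'f dtree \<Rightarrow> nat" where
  "tree_cplx \<psi> \<Gamma> = Max {\<psi> (map fst p) | p d. tree_path \<Gamma> p d}"

datatype cmode = CI | CD | CA

definition psi_of :: "nat \<Rightarrow> ('f list \<Rightarrow> nat) \<Rightarrow> cmode \<Rightarrow> 'f dtable \<Rightarrow> nat" where
  "psi_of k \<psi> m T = (case m of
      CI \<Rightarrow> \<psi> (atts T)
    | CD \<Rightarrow> (LEAST n. \<exists>\<Gamma>. dtree_for k T \<Gamma> \<and> tree_cplx \<psi> \<Gamma> = n)
    | CA \<Rightarrow> (LEAST n. \<exists>\<Gamma>. ndtree_for k T \<Gamma> \<and> tree_cplx \<psi> \<Gamma> = n))"

text \<open>The partial function U^{bc}_{C psi}, as nat => nat option (None = undefined).\<close>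
definition U_fun :: "nat \<Rightarrow> 'f dtable set \<Rightarrow> ('f list \<Rightarrow> nat) \<Rightarrow> cmode \<Rightarrow> cmode \<Rightarrow> nat \<Rightarrow> nat option" where
  "U_fun k C \<psi> b c n =
     (let S = {psi_of k \<psi> b T | T. T \<in> C \<and> psi_of k \<psi> c T \<le> n}
      in if S \<noteq> {} \<and> finite S then Some (Max S) else None)"

definition pdom :: "(nat \<Rightarrow> nat option) \<Rightarrow> nat set" where
  "pdom g = {n. g n \<noteq> None}"
definition pdom_plus :: "(nat \<Rightarrow> nat option) \<Rightarrow> nat set" where
  "pdom_plus g = {n \<in> pdom g. the (g n) \<ge> n}"
definition pdom_minus :: "(nat \<Rightarrow> nat option) \<Rightarrow> nat set" where
  "pdom_minus g = {n \<in> pdom g. the (g n) \<le> n}"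
definition bounded_above :: "(nat \<Rightarrow> nat option) \<Rightarrow> bool" where
  "bounded_above g \<longleftrightarrow> (\<exists>M. \<forall>n \<in> pdom g. the (g n) \<le> M)"

datatype ftype = TAlpha | TBeta | TGamma | TDelta | TEps

definition has_type :: "(nat \<Rightarrow> nat option) \<Rightarrow> ftype \<Rightarrow> bool" where
  "has_type g t = (case t of
      TAlpha \<Rightarrow> infinite (pdom g) \<and> bounded_above g
    | TBeta \<Rightarrow> infinite (pdom g) \<and> finite (pdom_plus g) \<and> \<not> bounded_above g
    | TGamma \<Rightarrow> infinite (pdom_plus g) \<and> infinite (pdom_minus g)
    | TDelta \<Rightarrow> infinite (pdom g) \<and> finite (pdom_minus g)
    | TEps \<Rightarrow> finite (pdom g))"

definition ftyp :: "(nat \<Rightarrow> nat option) \<Rightarrow> ftype" where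
  "ftyp g = (THE t. has_type g t)"

fun ftype_rank :: "ftype \<Rightarrow> nat" where
  "ftype_rank TAlpha = 0" | "ftype_rank TBeta = 1" | "ftype_rank TGamma = 2"
| "ftype_rank TDelta = 3" | "ftype_rank TEps = 4"

definition ftype_le :: "ftype \<Rightarrow> ftype \<Rightarrow> bool" (infix "\<preceq>\<^sub>t" 50) where
  "t1 \<preceq>\<^sub>t t2 \<longleftrightarrow> ftype_rank t1 \<le> ftype_rank t2"

end

theory Submission
  imports Defs "HOL-Library.Infinite_Set"
begin

(*
  The tree that queries all attributes of a table T in order is a deterministic decision
  tree for T of complexity psi(At(T)), so psi^a T <= psi^d T <= psi^i T for every table. Raising b pointwise, or
  lowering c pointwise, can only raise the values of U, and, as long as the new domain is
  infinite, it can only enlarge the domain, by finitely many points (those below the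
  c-value of one fixed table). Such a domination moves the type only upwards in the
  order alpha, beta, gamma, delta, epsilon.
*)

section \<open>Types of partial functions\<close>

lemma pdom_eq_pdom_plus_Un_pdom_minus: "pdom g = pdom_plus g \<union> pdom_minus g"
  unfolding pdom_plus_def pdom_minus_def by auto

lemma finite_pdom_plus_if_bounded_above:
  assumes "bounded_above g"
  shows "finite (pdom_plus g)"
proof -
  obtain M where "\<forall>n \<in> pdom g. the (g n) \<le> M"
    using assms unfolding bounded_above_def by blast
  then have "pdom_plus g \<subseteq> {..M}"
    unfolding pdom_plus_def by force
  then show ?thesis
    using finite_subset by blast
qed

lemma infinite_pdom_minus:
  assumes "infinite (pdom g)" and "finite (pdom_plus g)"
  shows "infinite (pdom_minus g)"
  using assms pdom_eq_pdom_plus_Un_pdom_minus by (metis finite_UnI)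

lemma has_type_exists: "\<exists>t. has_type g t"
proof (cases "finite (pdom g)")
  case True
  then show ?thesis by (intro exI[of _ TEps]) (simp add: has_type_def)
next
  case False
  then show ?thesis
    by (cases "finite (pdom_plus g)"; cases "bounded_above g"; cases "finite (pdom_minus g)")
      (auto simp: has_type_def intro: exI[of _ TAlpha] exI[of _ TBeta] exI[of _ TGamma] exI[of _ TDelta])
qed

lemma has_type_unique:
  assumes "has_type g t1" and "has_type g t2"
  shows "t1 = t2"
proof -
  have "finite (pdom g) \<longleftrightarrow> finite (pdom_plus g) \<and> finite (pdom_minus g)"
    using pdom_eq_pdom_plus_Un_pdom_minus[of g] by simp
  then show ?thesis
    using assms finite_pdom_plus_if_bounded_above[of g] infinite_pdom_minus[of g]
    by (cases t1; cases t2) (auto simp: has_type_def)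
qed

lemma has_type_ftyp: "has_type g (ftyp g)"
  unfolding ftyp_def using has_type_exists has_type_unique by (metis theI)

lemma ftyp_eqI: "has_type g t \<Longrightarrow> ftyp g = t"
  using has_type_ftyp has_type_unique by blast

lemma ftype_le_TEps: "t \<preceq>\<^sub>t TEps"
  by (cases t) (simp_all add: ftype_le_def)

lemma ftyp_mono:
  assumes dominated: "infinite (pdom g2) \<Longrightarrow>
      pdom g1 \<subseteq> pdom g2 \<and> finite (pdom g2 - pdom g1) \<and> (\<forall>n \<in> pdom g1. the (g1 n) \<le> the (g2 n))"
  shows "ftyp g1 \<preceq>\<^sub>t ftyp g2"
proof (cases "finite (pdom g2)")
  case True
  then have "ftyp g2 = TEps"
    by (intro ftyp_eqI) (simp add: has_type_def)
  then show ?thesis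
    by (simp add: ftype_le_TEps)
next
  case False
  with dominated have sub: "pdom g1 \<subseteq> pdom g2" and fin_diff: "finite (pdom g2 - pdom g1)"
    and le: "\<forall>n \<in> pdom g1. the (g1 n) \<le> the (g2 n)"
    by auto
  have "infinite (pdom g1)"
    using False fin_diff by (metis Un_Diff_cancel2 finite_Un)
  moreover have "pdom_plus g1 \<subseteq> pdom_plus g2"
    using sub le unfolding pdom_plus_def by force
  moreover have "infinite (pdom_minus g1)" if "infinite (pdom_minus g2)"
  proof -
    have "pdom_minus g2 \<subseteq> pdom_minus g1 \<union> (pdom g2 - pdom g1)"
      using le unfolding pdom_minus_def by force
    then show ?thesis
      using that fin_diff by (meson finite_Un finite_subset)
  qed
  moreover have "bounded_above g1" if "bounded_above g2"
    using that sub le unfolding bounded_above_def by (meson le_trans subsetD)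
  ultimately show ?thesis
    using False has_type_ftyp[of g1] has_type_ftyp[of g2]
      finite_pdom_plus_if_bounded_above[of g1] infinite_pdom_minus[of g1] infinite_pdom_minus[of g2]
    by (cases "ftyp g1"; cases "ftyp g2") (auto simp: has_type_def ftype_le_def dest: finite_subset)
qed

section \<open>Monotonicity of the type of U\<close>

definition max_under :: "'a set \<Rightarrow> ('a \<Rightarrow> nat) \<Rightarrow> ('a \<Rightarrow> nat) \<Rightarrow> nat \<Rightarrow> nat option" where
  "max_under I b c n = (let S = b ` {T \<in> I. c T \<le> n} in if S \<noteq> {} \<and> finite S then Some (Max S) else None)"

lemma U_fun_eq_max_under: "U_fun k C \<psi> b c = max_under C (psi_of k \<psi> b) (psi_of k \<psi> c)"
proof
  fix n
  have "{psi_of k \<psi> b T | T. T \<in> C \<and> psi_of k \<psi> c T \<le> n} = psi_of k \<psi> b ` {T \<in> C. psi_of k \<psi> c T \<le> n}"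
    by blast
  then show "U_fun k C \<psi> b c n = max_under C (psi_of k \<psi> b) (psi_of k \<psi> c) n"
    unfolding U_fun_def max_under_def by simp
qed

lemma pdom_max_under_iff:
  "n \<in> pdom (max_under I b c) \<longleftrightarrow> {T \<in> I. c T \<le> n} \<noteq> {} \<and> finite (b ` {T \<in> I. c T \<le> n})"
  unfolding pdom_def max_under_def Let_def by auto

lemma the_max_under:
  "n \<in> pdom (max_under I b c) \<Longrightarrow> the (max_under I b c n) = Max (b ` {T \<in> I. c T \<le> n})"
  unfolding pdom_def max_under_def Let_def by (auto split: if_splits)

lemma pdom_max_under_subset:
  assumes inf: "infinite (pdom (max_under I b' c'))" and le: "\<forall>T \<in> I. c' T \<le> c T"
  shows "pdom (max_under I b c) \<subseteq> pdom (max_under I b' c')"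
proof
  fix n
  assume n: "n \<in> pdom (max_under I b c)"
  obtain m where m: "m \<in> pdom (max_under I b' c')" "n \<le> m"
    using inf unfolding infinite_nat_iff_unbounded_le by blast
  have "{T \<in> I. c' T \<le> n} \<subseteq> {T \<in> I. c' T \<le> m}"
    using \<open>n \<le> m\<close> by force
  then have "finite (b' ` {T \<in> I. c' T \<le> n})"
    using m(1) finite_subset[OF image_mono] unfolding pdom_max_under_iff by blast
  moreover have "{T \<in> I. c T \<le> n} \<subseteq> {T \<in> I. c' T \<le> n}"
    using le by force
  ultimately show "n \<in> pdom (max_under I b' c')"
    using n unfolding pdom_max_under_iff by blast
qed

lemma ftyp_max_under_antimono_constraint:
  assumes le: "\<forall>T \<in> I. c' T \<le> c T"
  shows "ftyp (max_under I b c) \<preceq>\<^sub>t ftyp (max_under I b c')"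
proof (rule ftyp_mono)
  let ?g = "max_under I b c" and ?g' = "max_under I b c'"
  assume inf: "infinite (pdom ?g')"
  have sub_sets: "{T \<in> I. c T \<le> n} \<subseteq> {T \<in> I. c' T \<le> n}" for n
    using le by force
  have sub: "pdom ?g \<subseteq> pdom ?g'"
    using pdom_max_under_subset[OF inf le] .
  obtain n0 where "n0 \<in> pdom ?g'"
    using inf by (metis finite.emptyI equals0I)
  then obtain T0 where "T0 \<in> I"
    unfolding pdom_max_under_iff by blast
  have "n \<in> pdom ?g" if n: "n \<in> pdom ?g'" and "c T0 \<le> n" for n
  proof -
    have "{T \<in> I. c T \<le> n} \<noteq> {}"
      using \<open>T0 \<in> I\<close> \<open>c T0 \<le> n\<close> by force
    moreover have "finite (b ` {T \<in> I. c T \<le> n})"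
      using n sub_sets[of n] finite_subset[OF image_mono] unfolding pdom_max_under_iff by blast
    ultimately show ?thesis
      unfolding pdom_max_under_iff by blast
  qed
  then have "pdom ?g' - pdom ?g \<subseteq> {..<c T0}"
    by force
  then have "finite (pdom ?g' - pdom ?g)"
    using finite_subset by blast
  moreover have "the (?g n) \<le> the (?g' n)" if n: "n \<in> pdom ?g" for n
  proof -
    have "n \<in> pdom ?g'"
      using sub n by blast
    then show ?thesis
      using n Max_mono[OF image_mono[OF sub_sets]] unfolding the_max_under[OF n] the_max_under[OF \<open>n \<in> pdom ?g'\<close>]
      unfolding pdom_max_under_iff by blast
  qed
  ultimately show "pdom ?g \<subseteq> pdom ?g' \<and> finite (pdom ?g' - pdom ?g) \<and> (\<forall>n \<in> pdom ?g. the (?g n) \<le> the (?g' n))"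
    using sub by blast
qed

lemma finite_image_and_Max_le_if_pointwise_le:
  fixes b b' :: "'a \<Rightarrow> nat"
  assumes fin: "finite (b' ` J)" and "J \<noteq> {}" and le: "\<forall>T \<in> J. b T \<le> b' T"
  shows "finite (b ` J)" and "Max (b ` J) \<le> Max (b' ` J)"
proof -
  have "b T \<le> Max (b' ` J)" if "T \<in> J" for T
  proof -
    have "b' T \<le> Max (b' ` J)"
      using fin that by simp
    then show ?thesis
      using le[rule_format, OF that] by linarith
  qed
  then have bounded: "b ` J \<subseteq> {..Max (b' ` J)}"
    by auto
  then show "finite (b ` J)"
    using finite_subset by blast
  then show "Max (b ` J) \<le> Max (b' ` J)"
    using bounded \<open>J \<noteq> {}\<close> by (subst Max_le_iff) auto
qed

lemma ftyp_max_under_mono_measure: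
  assumes le: "\<forall>T \<in> I. b T \<le> b' T"
  shows "ftyp (max_under I b c) \<preceq>\<^sub>t ftyp (max_under I b' c)"
proof (rule ftyp_mono)
  let ?g = "max_under I b c" and ?g' = "max_under I b' c" and ?J = "\<lambda>n. {T \<in> I. c T \<le> n}"
  assume inf: "infinite (pdom ?g')"
  have sub: "pdom ?g \<subseteq> pdom ?g'"
    using pdom_max_under_subset[OF inf] by simp
  moreover have "pdom ?g' \<subseteq> pdom ?g"
  proof
    fix n
    assume "n \<in> pdom ?g'"
    then have "finite (b' ` ?J n)" and "?J n \<noteq> {}"
      unfolding pdom_max_under_iff by blast+
    then show "n \<in> pdom ?g"
      using le finite_image_and_Max_le_if_pointwise_le(1) unfolding pdom_max_under_iff by blast
  qed
  moreover have "the (?g n) \<le> the (?g' n)" if n: "n \<in> pdom ?g" for n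
  proof -
    have n': "n \<in> pdom ?g'"
      using sub n by blast
    then have "finite (b' ` ?J n)" and "?J n \<noteq> {}"
      unfolding pdom_max_under_iff by blast+
    then show ?thesis
      using le finite_image_and_Max_le_if_pointwise_le(2)
      unfolding the_max_under[OF n] the_max_under[OF n'] by blast
  qed
  ultimately show "pdom ?g \<subseteq> pdom ?g' \<and> finite (pdom ?g' - pdom ?g) \<and> (\<forall>n \<in> pdom ?g. the (?g n) \<le> the (?g' n))"
    by simp
qed

section \<open>The tree querying all attributes\<close>

fun query_all :: "nat \<Rightarrow> (nat list \<Rightarrow> nat) \<Rightarrow> 'f list \<Rightarrow> nat list \<Rightarrow> 'f dnode" where
  "query_all k L [] v = Term (L v)"
| "query_all k L (f # fs) v = Work f (map (\<lambda>\<delta>. (\<delta>, query_all k L fs (v @ [\<delta>]))) [0..<k])"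

lemma node_path_Term_iff: "node_path (Term d') p d \<longleftrightarrow> p = [] \<and> d = d'"
  by (auto elim: node_path.cases intro: node_path.intros)

lemma node_path_Work_iff:
  "node_path (Work f cs) p d \<longleftrightarrow> (\<exists>\<delta> c p'. (\<delta>, c) \<in> set cs \<and> node_path c p' d \<and> p = (f, \<delta>) # p')"
  by (rule iffI, cases rule: node_path.cases, auto intro: node_path.intros)

lemma node_path_query_all_iff:
  "node_path (query_all k L fs v) p d \<longleftrightarrow>
     (\<exists>w. length w = length fs \<and> (\<forall>x \<in> set w. x < k) \<and> p = zip fs w \<and> d = L (v @ w))"
proof (induction fs arbitrary: v p)
  case Nil
  then show ?case
    by (simp add: node_path_Term_iff)
next
  case (Cons f fs)
  show ?case (is "_ \<longleftrightarrow> (\<exists>w. ?path w)")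
  proof -
    have "node_path (query_all k L (f # fs) v) p d \<longleftrightarrow>
        (\<exists>\<delta> p'. \<delta> < k \<and> node_path (query_all k L fs (v @ [\<delta>])) p' d \<and> p = (f, \<delta>) # p')"
      by (force simp: node_path_Work_iff)
    also have "\<dots> \<longleftrightarrow> (\<exists>\<delta> w'. ?path (\<delta> # w'))"
      by (auto simp: Cons.IH)
    also have "\<dots> \<longleftrightarrow> (\<exists>w. ?path w)"
    proof -
      have "\<not> ?path []"
        by simp
      then show ?thesis
        by (metis list.exhaust)
    qed
    finally show ?thesis .
  qed
qed

lemma wf_node_query_all: "set fs \<subseteq> A \<Longrightarrow> k \<ge> 1 \<Longrightarrow> wf_node k A (query_all k L fs v)"
  by (induction fs arbitrary: v) (auto intro!: wf_node.intros)

lemma det_node_query_all: "det_node (query_all k L fs v)"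
  by (induction fs arbitrary: v) (auto intro!: det_node.intros simp: comp_def)

lemma tree_cplx_query_all:
  assumes "k \<ge> 1"
  shows "tree_cplx \<psi> [query_all k L fs []] = \<psi> fs"
proof -
  have "{\<psi> (map fst p) | p d. tree_path [query_all k L fs []] p d} = {\<psi> fs}"
  proof (rule set_eqI, rule iffI)
    fix x
    assume "x \<in> {\<psi> (map fst p) | p d. tree_path [query_all k L fs []] p d}"
    then show "x \<in> {\<psi> fs}"
      by (auto simp: tree_path_def node_path_query_all_iff)
  next
    fix x
    assume "x \<in> {\<psi> fs}"
    moreover have "node_path (query_all k L fs []) (zip fs (replicate (length fs) 0)) (L (replicate (length fs) 0))"
      unfolding node_path_query_all_iff using assms by (intro exI[of _ "replicate (length fs) 0"]) auto
    ultimately show "x \<in> {\<psi> (map fst p) | p d. tree_path [query_all k L fs []] p d}"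
      unfolding tree_path_def by force
  qed
  then show ?thesis
    unfolding tree_cplx_def by simp
qed

lemma sub_rows_zip_atts_iff:
  assumes T: "table_in k T" and r: "r \<in> set (map fst (rows T))" and w: "length w = length (atts T)"
  shows "r \<in> sub_rows T (zip (atts T) w) \<longleftrightarrow> r = w"
proof
  assume sub: "r \<in> sub_rows T (zip (atts T) w)"
  have "r ! i = w ! i" if i: "i < length (atts T)" for i
  proof -
    have "(atts T ! i, w ! i) \<in> set (zip (atts T) w)"
      using i w by (auto simp: set_zip)
    then show ?thesis
      using sub i unfolding sub_rows_def by blast
  qed
  moreover have "length r = length (atts T)"
    using T r unfolding table_in_def by auto
  ultimately show "r = w"
    using w by (simp add: nth_equalityI)
next
  assume "r = w"
  have equal_columns: "r ! i = r ! j" if "i < length (atts T)" "j < length (atts T)" "atts T ! i = atts T ! j" for i j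
    using T r that unfolding table_in_def by fastforce
  have "r ! i = \<delta>"
    if mem: "(f, \<delta>) \<in> set (zip (atts T) w)" and i: "i < length (atts T)" and f: "atts T ! i = f" for f \<delta> i
  proof -
    obtain j where j: "j < length (zip (atts T) w)" "zip (atts T) w ! j = (f, \<delta>)"
      using mem unfolding in_set_conv_nth by blast
    then have "j < length (atts T)" "f = atts T ! j" "\<delta> = w ! j"
      using w by auto
    then show ?thesis
      using equal_columns[OF i \<open>j < length (atts T)\<close>] f \<open>r = w\<close> by simp
  qed
  then show "r \<in> sub_rows T (zip (atts T) w)"
    using r unfolding sub_rows_def by blast
qed

lemma dtree_for_query_all:
  assumes T: "table_in k T" and "k \<ge> 1" and L: "\<forall>(r, D) \<in> set (rows T). L r \<in> D"
  shows "dtree_for k T [query_all k L (atts T) []]"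
proof -
  let ?\<Gamma> = "[query_all k L (atts T) []]"
  have path: "tree_path ?\<Gamma> p d \<longleftrightarrow>
      (\<exists>w. length w = length (atts T) \<and> (\<forall>x \<in> set w. x < k) \<and> p = zip (atts T) w \<and> d = L w)" for p d
    by (simp add: tree_path_def node_path_query_all_iff)
  have row: "length r = length (atts T)" "\<forall>x \<in> set r. x < k" if "(r, D) \<in> set (rows T)" for r D
    using T that unfolding table_in_def by fastforce+
  have cover: "\<Union>{sub_rows T p | p d. tree_path ?\<Gamma> p d} = set (map fst (rows T))"
  proof
    show "\<Union>{sub_rows T p | p d. tree_path ?\<Gamma> p d} \<subseteq> set (map fst (rows T))"
      unfolding sub_rows_def by blast
    show "set (map fst (rows T)) \<subseteq> \<Union>{sub_rows T p | p d. tree_path ?\<Gamma> p d}"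
    proof
      fix r
      assume r: "r \<in> set (map fst (rows T))"
      then obtain D where "(r, D) \<in> set (rows T)"
        by auto
      then have len: "length r = length (atts T)" and "\<forall>x \<in> set r. x < k"
        using row by blast+
      then have "tree_path ?\<Gamma> (zip (atts T) r) (L r)"
        unfolding path by (intro exI[of _ r]) simp
      moreover have "r \<in> sub_rows T (zip (atts T) r)"
        using sub_rows_zip_atts_iff[OF T r len] by simp
      ultimately show "r \<in> \<Union>{sub_rows T p | p d. tree_path ?\<Gamma> p d}"
        by blast
    qed
  qed
  have correct: "d \<in> D" if rD: "(r, D) \<in> set (rows T)" and "tree_path ?\<Gamma> p d" and "r \<in> sub_rows T p" for r D p d
  proof -
    obtain w where "length w = length (atts T)" "p = zip (atts T) w" "d = L w"
      using \<open>tree_path ?\<Gamma> p d\<close> path by blast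
    moreover have "r \<in> set (map fst (rows T))"
      using rD by force
    ultimately have "r = w"
      using sub_rows_zip_atts_iff[OF T] \<open>r \<in> sub_rows T p\<close> by blast
    then show ?thesis
      using L rD \<open>d = L w\<close> by auto
  qed
  have "wf_node k (set (atts T)) (query_all k L (atts T) [])"
    using wf_node_query_all[OF order_refl \<open>k \<ge> 1\<close>] .
  then show ?thesis
    unfolding dtree_for_def ndtree_for_def
    using cover correct det_node_query_all by fastforce
qed

lemma ex_dtree_for_with_tree_cplx_atts:
  assumes T: "table_in k T" and "k \<ge> 1"
  shows "\<exists>\<Gamma>. dtree_for k T \<Gamma> \<and> tree_cplx \<psi> \<Gamma> = \<psi> (atts T)"
proof -
  define L where "L r = (SOME d. d \<in> the (map_of (rows T) r))" for r
  have "L r \<in> D" if "(r, D) \<in> set (rows T)" for r D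
  proof -
    have "map_of (rows T) r = Some D"
      using T that unfolding table_in_def by (simp add: map_of_is_SomeI)
    moreover have "D \<noteq> {}"
      using T that unfolding table_in_def by fast
    ultimately show ?thesis
      unfolding L_def by (simp add: some_in_eq)
  qed
  then show ?thesis
    using dtree_for_query_all[OF assms] tree_cplx_query_all[OF \<open>k \<ge> 1\<close>] by blast
qed

lemma psi_of_CD_le_CI:
  assumes "table_in k T" and "k \<ge> 1"
  shows "psi_of k \<psi> CD T \<le> psi_of k \<psi> CI T"
  using ex_dtree_for_with_tree_cplx_atts[OF assms] unfolding psi_of_def by (auto intro: Least_le)

lemma psi_of_CA_le_CD:
  assumes "table_in k T" and "k \<ge> 1"
  shows "psi_of k \<psi> CA T \<le> psi_of k \<psi> CD T"
proof -
  have "\<exists>n \<Gamma>. dtree_for k T \<Gamma> \<and> tree_cplx \<psi> \<Gamma> = n"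
    using ex_dtree_for_with_tree_cplx_atts[OF assms] by blast
  from LeastI_ex[OF this] obtain \<Gamma> where "dtree_for k T \<Gamma>" and cplx: "tree_cplx \<psi> \<Gamma> = psi_of k \<psi> CD T"
    unfolding psi_of_def by auto
  then have "ndtree_for k T \<Gamma>"
    unfolding dtree_for_def by blast
  then have "psi_of k \<psi> CA T \<le> tree_cplx \<psi> \<Gamma>"
    unfolding psi_of_def by (auto intro: Least_le)
  then show ?thesis
    using cplx by simp
qed

theorem lemma3:
  fixes k :: nat and C :: "'f dtable set" and \<psi> :: "'f list \<Rightarrow> nat" and b :: cmode
  assumes "k \<ge> 2" and "closed_class k C"
  shows "ftyp (U_fun k C \<psi> b CI) \<preceq>\<^sub>t ftyp (U_fun k C \<psi> b CD)
       \<and> ftyp (U_fun k C \<psi> b CD) \<preceq>\<^sub>t ftyp (U_fun k C \<psi> b CA)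
       \<and> ftyp (U_fun k C \<psi> CA b) \<preceq>\<^sub>t ftyp (U_fun k C \<psi> CD b)
       \<and> ftyp (U_fun k C \<psi> CD b) \<preceq>\<^sub>t ftyp (U_fun k C \<psi> CI b)"
proof -
  have "k \<ge> 1" and "\<forall>T \<in> C. table_in k T"
    using assms unfolding closed_class_def by auto
  then have CD_le_CI: "\<forall>T \<in> C. psi_of k \<psi> CD T \<le> psi_of k \<psi> CI T"
    and CA_le_CD: "\<forall>T \<in> C. psi_of k \<psi> CA T \<le> psi_of k \<psi> CD T"
    using psi_of_CD_le_CI psi_of_CA_le_CD by blast+
  show ?thesis
    unfolding U_fun_eq_max_under
    using ftyp_max_under_antimono_constraint[OF CD_le_CI] ftyp_max_under_antimono_constraint[OF CA_le_CD]
      ftyp_max_under_mono_measure[OF CA_le_CD] ftyp_max_under_mono_measure[OF CD_le_CI]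
    by blast
qed

end
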